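(* Let $\alpha\in\{1/2,1\}$ and $\beta\in(0,1]$. The function $\rho\mapsto\Lambda_*(\rho,\beta,\alpha)$ is decreasing on $[0,1]$, with \[ \lim_{\rho\to0}\Lambda_*(\rho,\beta,\alpha)=\Lambda_*(0,\beta,\alpha)=1+\sqrt\beta,\qquad \lim_{\rho\to1}\Lambda_*(\rho,\beta,\alpha)=\Lambda_*(1,\beta,\alpha)=0. \] For $\rho\in(0,1)$, $\Lambda_*(\rho,\beta,\alpha)$ is the unique root in $\Lambda$ of \[ P_\gamma\bigl(\Lambda^2;\tfrac12\bigr)-\Lambda\,P_\gamma(\Lambda^2;0)=\frac{\Lambda\rho}{\alpha(1-\rho)}, \] and the left-hand side of this equation is a decreasing function of $\Lambda$.
   Context: For $\gamma>0$, $\gamma_\pm=(1\pm\sqrt\gamma)^2$, the Marčenko–Pastur density is $p_\gamma(t)=\frac{1}{2\pi\gamma t}\sqrt{(\gamma_+-t)(t-\gamma_-)}\mathbf 1_{[\gamma_-,\gamma_+]}(t)$, and $P_\gamma(x;k)=\int_x^{\gamma_+}t^kp_\gamma(t)\,dt$. For $\alpha\in\{1/2,1\}$, \[ \mathbf M(\Lambda;\rho,\tilde\rho,\alpha)=\rho+\tilde\rho-\rho\tilde\rho+(1-\tilde\rho)\Bigl[\rho\Lambda^2+\alpha(1-\rho)\bigl(P_\gamma(\Lambda^2;1)-2\Lambda P_\gamma(\Lambda^2;\tfrac12)+\Lambda^2P_\gamma(\Lambda^2;0)\bigr)\Bigr], \] with $\gamma=(\tilde\rho-\rho\tilde\rho)/(\rho-\rho\tilde\rho)$.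 Here $\tilde\rho=\beta\rho$, so $\gamma=\beta(1-\rho)/(1-\beta\rho)$, and $\Lambda_*(\rho,\beta,\alpha)=\operatorname{argmin}_\Lambda\mathbf M(\Lambda;\rho,\beta\rho,\alpha)$ (at $\rho\in\{0,1\}$ defined by the stated values/limits). *)

theory Defs
  imports "HOL-Analysis.Analysis"
begin

definition gam_plus :: "real \<Rightarrow> real" where
  "gam_plus \<gamma> = (1 + sqrt \<gamma>)^2"

definition gam_minus :: "real \<Rightarrow> real" where
  "gam_minus \<gamma> = (1 - sqrt \<gamma>)^2"

definition mp_density :: "real \<Rightarrow> real \<Rightarrow> real" where
  "mp_density \<gamma> t =
     (if gam_minus \<gamma> \<le> t \<and> t \<le> gam_plus \<gamma>
      then sqrt ((gam_plus \<gamma> - t) * (t - gam_minus \<gamma>)) / (2 * pi * \<gamma> * t)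
      else 0)"

definition MP_P :: "real \<Rightarrow> real \<Rightarrow> real \<Rightarrow> real" where
  "MP_P \<gamma> x k = (LINT t:{x..gam_plus \<gamma>}|lborel. t powr k * mp_density \<gamma> t)"

definition MPgamma :: "real \<Rightarrow> real \<Rightarrow> real" where
  "MPgamma \<rho> \<rho>t = (\<rho>t - \<rho> * \<rho>t) / (\<rho> - \<rho> * \<rho>t)"

definition Mfun :: "real \<Rightarrow> real \<Rightarrow> real \<Rightarrow> real \<Rightarrow> real" where
  "Mfun \<Lambda> \<rho> \<rho>t \<alpha> =
     (let \<gamma> = MPgamma \<rho> \<rho>t in
      \<rho> + \<rho>t - \<rho> * \<rho>t + (1 - \<rho>t) * (\<rho> * \<Lambda>^2 + \<alpha> * (1 - \<rho>) *
        (MP_P \<gamma> (\<Lambda>^2) 1 - 2 * \<Lambda> * MP_P \<gamma> (\<Lambda>^2) (1/2) + \<Lambda>^2 * MP_P \<gamma> (\<Lambda>^2) 0)))"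

definition Lstar :: "real \<Rightarrow> real \<Rightarrow> real \<Rightarrow> real" where
  "Lstar \<rho> \<beta> \<alpha> =
     (if \<rho> = 0 then 1 + sqrt \<beta>
      else if \<rho> = 1 then 0
      else (THE \<Lambda>. 0 \<le> \<Lambda> \<and> (\<forall>L\<ge>0. Mfun \<Lambda> \<rho> (\<beta> * \<rho>) \<alpha> \<le> Mfun L \<rho> (\<beta> * \<rho>) \<alpha>)))"

end

theory Submission
  imports Defs
begin

text \<open>Write \<open>w\<^sub>\<gamma> = \<gamma> p\<^sub>\<gamma>\<close>, \<open>G\<^sub>\<gamma>(\<Lambda>) = \<integral> (\<surd>t - \<Lambda>)\<^sub>+ w\<^sub>\<gamma>(t) dt\<close> and
  \<open>H\<^sub>\<gamma>(\<Lambda>) = \<integral> (\<surd>t - \<Lambda>)\<^sub>+\<^sup>2 w\<^sub>\<gamma>(t) dt\<close> (\<open>mp_weight\<close>, \<open>mp_hinge\<close>, \<open>mp_hinge_sq\<close>).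
  Then the left-hand side of the root equation is \<open>G\<^sub>\<gamma>(\<Lambda>)/\<gamma>\<close> and the bracket in \<open>M\<close> is
  \<open>H\<^sub>\<gamma>(\<Lambda>)/\<gamma>\<close>. Since \<open>H\<^sub>\<gamma>\<close> is convex with slope \<open>-2G\<^sub>\<gamma>\<close>, minimising \<open>M\<close> amounts to
  minimising the strictly convex \<open>\<rho>\<Lambda>\<^sup>2 + c H\<^sub>\<gamma>(\<Lambda>)\<close>, \<open>c = \<alpha>(1-\<beta>\<rho>)/\<beta>\<close>, whose minimiser
  is the unique root of \<open>c G\<^sub>\<gamma>(\<Lambda>) = \<rho>\<Lambda>\<close> (it exists by continuity, \<open>G\<^sub>\<gamma>\<close> being
  nonincreasing and zero beyond \<open>1 + \<surd>\<gamma>\<close>). As \<open>\<rho>\<close> grows, \<open>c\<close> and \<open>\<gamma>\<close> decrease, and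
  \<open>w\<^sub>\<gamma>\<close> increases pointwise with \<open>\<gamma>\<close>, so the root decreases. As \<open>\<rho> \<rightarrow> 1\<close>, the bound
  \<open>G\<^sub>\<gamma> \<le> C\<surd>\<gamma>\<close> pushes the root to 0; as \<open>\<rho> \<rightarrow> 0\<close>, \<open>\<gamma> \<rightarrow> \<beta>\<close> and \<open>G\<^sub>\<gamma>(a)\<close> stays
  positive for each \<open>a < 1 + \<surd>\<beta>\<close>, which pushes the root up to \<open>1 + \<surd>\<beta>\<close>.\<close>

definition mp_quad :: "real \<Rightarrow> real \<Rightarrow> real" where
  "mp_quad \<gamma> t = 2 * t * (1 + \<gamma>) - t^2 - (1 - \<gamma>)^2"

text \<open>For \<open>\<gamma> > 0\<close> this is \<open>\<gamma> * mp_density \<gamma> t\<close>; without the case split it is visibly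
  monotone in \<open>\<gamma>\<close>.\<close>
definition mp_weight :: "real \<Rightarrow> real \<Rightarrow> real" where
  "mp_weight \<gamma> t = sqrt (max 0 (mp_quad \<gamma> t)) / (2 * pi * t)"

lemma gam_plus_minus_product:
  assumes "0 \<le> \<gamma>"
  shows "(gam_plus \<gamma> - t) * (t - gam_minus \<gamma>) = mp_quad \<gamma> t"
  using assms unfolding gam_plus_def gam_minus_def mp_quad_def
  by (simp add: power2_eq_square algebra_simps)

lemma gam_minus_less_gam_plus: "0 < \<gamma> \<Longrightarrow> gam_minus \<gamma> < gam_plus \<gamma>"
  unfolding gam_plus_def gam_minus_def by (simp add: power2_eq_square algebra_simps)

lemma mp_quad_pos_iff:
  assumes "0 < \<gamma>"
  shows "0 < mp_quad \<gamma> t \<longleftrightarrow> gam_minus \<gamma> < t \<and> t < gam_plus \<gamma>"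
proof -
  have "0 < mp_quad \<gamma> t \<longleftrightarrow> 0 < (gam_plus \<gamma> - t) * (t - gam_minus \<gamma>)"
    using gam_plus_minus_product[of \<gamma> t] assms by simp
  also have "\<dots> \<longleftrightarrow> gam_minus \<gamma> < t \<and> t < gam_plus \<gamma>"
    using gam_minus_less_gam_plus[OF assms] by (auto simp: zero_less_mult_iff)
  finally show ?thesis .
qed

lemma mp_quad_nonneg_iff:
  assumes "0 < \<gamma>"
  shows "0 \<le> mp_quad \<gamma> t \<longleftrightarrow> gam_minus \<gamma> \<le> t \<and> t \<le> gam_plus \<gamma>"
proof -
  have "0 \<le> mp_quad \<gamma> t \<longleftrightarrow> 0 \<le> (gam_plus \<gamma> - t) * (t - gam_minus \<gamma>)"
    using gam_plus_minus_product[of \<gamma> t] assms by simp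
  also have "\<dots> \<longleftrightarrow> gam_minus \<gamma> \<le> t \<and> t \<le> gam_plus \<gamma>"
    using gam_minus_less_gam_plus[OF assms] by (auto simp: zero_le_mult_iff)
  finally show ?thesis .
qed

lemma mp_density_eq_mp_weight:
  assumes "0 < \<gamma>"
  shows "mp_density \<gamma> t = mp_weight \<gamma> t / \<gamma>"
proof (cases "0 \<le> mp_quad \<gamma> t")
  case True
  then show ?thesis
    using mp_quad_nonneg_iff[OF assms] gam_plus_minus_product[of \<gamma> t] assms
    unfolding mp_density_def mp_weight_def by simp
next
  case False
  then have "max 0 (mp_quad \<gamma> t) = 0" by simp
  then show ?thesis
    using False mp_quad_nonneg_iff[OF assms, of t] unfolding mp_density_def mp_weight_def by auto
qed

lemma mp_quad_pos_imp:
  assumes "0 \<le> \<gamma>" "\<gamma> \<le> 1" "0 < mp_quad \<gamma> t"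
  shows "0 < t" "t \<le> 4"
proof -
  have lt: "t * t < t * (2 * (1 + \<gamma>))"
    using assms(3) zero_le_power2[of "1 - \<gamma>"] unfolding mp_quad_def
    by (simp add: power2_eq_square algebra_simps)
  show t: "0 < t"
  proof (rule ccontr)
    assume "\<not> 0 < t"
    then have "t * (2 * (1 + \<gamma>)) \<le> 0"
      using assms(1) by (intro mult_nonpos_nonneg) auto
    then show False
      using lt zero_le_square[of t] by linarith
  qed
  show "t \<le> 4"
    using lt t assms(2) by (simp add: mult_less_cancel_left_pos)
qed

lemma mp_quad_le: "mp_quad \<gamma> t \<le> \<gamma> * (2 * t + 2)"
proof -
  have "mp_quad \<gamma> t = \<gamma> * (2 * t + 2) - (t - 1)^2 - \<gamma>^2"
    unfolding mp_quad_def by (simp add: power2_eq_square algebra_simps)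
  then show ?thesis by simp
qed

lemma mp_quad_mono:
  assumes "0 \<le> \<gamma>\<^sub>2" "\<gamma>\<^sub>2 \<le> \<gamma>\<^sub>1" "\<gamma>\<^sub>1 \<le> 1" "0 \<le> t"
  shows "mp_quad \<gamma>\<^sub>2 t \<le> mp_quad \<gamma>\<^sub>1 t"
proof -
  have "mp_quad \<gamma>\<^sub>1 t - mp_quad \<gamma>\<^sub>2 t = (\<gamma>\<^sub>1 - \<gamma>\<^sub>2) * (2 * t + 2 - \<gamma>\<^sub>1 - \<gamma>\<^sub>2)"
    unfolding mp_quad_def by (simp add: power2_eq_square algebra_simps)
  moreover have "0 \<le> (\<gamma>\<^sub>1 - \<gamma>\<^sub>2) * (2 * t + 2 - \<gamma>\<^sub>1 - \<gamma>\<^sub>2)"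
    using assms by (intro mult_nonneg_nonneg) auto
  ultimately show ?thesis by simp
qed

lemma mp_weight_eq_0:
  assumes "0 \<le> \<gamma>" "\<gamma> \<le> 1" "\<not> (0 < t \<and> t \<le> 4)"
  shows "mp_weight \<gamma> t = 0"
proof -
  have "max 0 (mp_quad \<gamma> t) = 0"
    using mp_quad_pos_imp[OF assms(1,2), of t] assms(3) by fastforce
  then show ?thesis unfolding mp_weight_def by simp
qed

lemma mp_weight_nonneg:
  assumes "0 \<le> \<gamma>" "\<gamma> \<le> 1"
  shows "0 \<le> mp_weight \<gamma> t"
proof (cases "0 < t")
  case True
  then show ?thesis unfolding mp_weight_def by simp
next
  case False
  then show ?thesis using mp_weight_eq_0[OF assms] by simp
qed

lemma mp_weight_mono:
  assumes "0 \<le> \<gamma>\<^sub>2" "\<gamma>\<^sub>2 \<le> \<gamma>\<^sub>1" "\<gamma>\<^sub>1 \<le> 1"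
  shows "mp_weight \<gamma>\<^sub>2 t \<le> mp_weight \<gamma>\<^sub>1 t"
proof (cases "0 < t")
  case True
  then have "sqrt (max 0 (mp_quad \<gamma>\<^sub>2 t)) \<le> sqrt (max 0 (mp_quad \<gamma>\<^sub>1 t))"
    using mp_quad_mono[OF assms, of t] by (intro real_sqrt_le_mono max.mono) auto
  then show ?thesis
    using True unfolding mp_weight_def by (simp add: divide_right_mono)
next
  case False
  then show ?thesis using mp_weight_eq_0 assms by simp
qed

lemma mp_weight_le:
  assumes "0 \<le> \<gamma>" "\<gamma> \<le> 1"
  shows "mp_weight \<gamma> t \<le> indicator {0<..4} t / sqrt t"
proof (cases "0 < t \<and> t \<le> 4")
  case True
  have "2 * t * (1 + \<gamma>) \<le> 4 * t"
    using assms True by (simp add: mult_left_mono)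
  then have "max 0 (mp_quad \<gamma> t) \<le> 4 * t"
    using True zero_le_power2[of t] zero_le_power2[of "1 - \<gamma>"] unfolding mp_quad_def by linarith
  then have "sqrt (max 0 (mp_quad \<gamma> t)) \<le> sqrt (4 * t)"
    by (rule real_sqrt_le_mono)
  then have "sqrt (max 0 (mp_quad \<gamma> t)) \<le> 2 * sqrt t"
    by (simp add: real_sqrt_mult)
  then have "mp_weight \<gamma> t \<le> 2 * sqrt t / (2 * pi * t)"
    unfolding mp_weight_def by (rule divide_right_mono) (use True in simp)
  also have "\<dots> = 1 / (pi * sqrt t)"
    using True by (simp add: divide_simps flip: real_sqrt_mult)
  also have "\<dots> \<le> 1 / sqrt t"
    using True pi_ge_two by (intro divide_left_mono) auto
  finally show ?thesis using True by simp
next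
  case False
  then show ?thesis using mp_weight_eq_0[OF assms] by simp
qed

lemma mp_weight_measurable [measurable]: "mp_weight \<gamma> \<in> borel_measurable borel"
  unfolding mp_weight_def mp_quad_def by measurable

lemma integrable_inverse_sqrt:
  fixes b :: real
  shows "integrable lborel (\<lambda>t. indicator {0<..b} t / sqrt t)"
proof (cases "0 \<le> b")
  case True
  have "(\<lambda>t. t powr (-1/2)) absolutely_integrable_on {0<..b}"
    using True by (intro nonnegative_absolutely_integrable_1 integrable_on_powr_from_0') auto
  then have "integrable lebesgue (\<lambda>t. indicator {0<..b} t *\<^sub>R t powr (-1/2))"
    unfolding set_integrable_def .
  moreover have "indicator {0<..b} t *\<^sub>R t powr (-1/2) = indicator {0<..b} t / sqrt t" for t :: real
    by (cases "0 < t") (simp_all add: powr_minus_divide powr_half_sqrt indicator_def)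
  ultimately have "integrable lebesgue (\<lambda>t. indicator {0<..b} t / sqrt t)"
    by simp
  then show ?thesis
    by (subst (asm) integrable_completion) measurable
next
  case False
  then show ?thesis by simp
qed

lemma integrable_mult_mp_weight:
  assumes "0 \<le> \<gamma>" "\<gamma> \<le> 1" "h \<in> borel_measurable borel"
    and bounded: "\<And>t. 0 < t \<Longrightarrow> t \<le> 4 \<Longrightarrow> \<bar>h t\<bar> \<le> C"
  shows "integrable lborel (\<lambda>t. h t * mp_weight \<gamma> t)"
proof (rule Bochner_Integration.integrable_bound)
  show "integrable lborel (\<lambda>t. C * (indicator {0<..4} t / sqrt t))"
    by (intro integrable_mult_right integrable_inverse_sqrt)
  show "(\<lambda>t. h t * mp_weight \<gamma> t) \<in> borel_measurable lborel"
    using assms(3) by measurable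
  have "norm (h t * mp_weight \<gamma> t) \<le> norm (C * (indicator {0<..4} t / sqrt t))" for t
  proof (cases "0 < t \<and> t \<le> 4")
    case True
    then have "\<bar>h t\<bar> * mp_weight \<gamma> t \<le> \<bar>C\<bar> * (1 / sqrt t)"
      using bounded[of t] mp_weight_nonneg[OF assms(1,2)] mp_weight_le[OF assms(1,2), of t]
      by (intro mult_mono) auto
    then show ?thesis
      using True mp_weight_nonneg[OF assms(1,2), of t] by (simp add: abs_mult)
  next
    case False
    then show ?thesis using mp_weight_eq_0[OF assms(1,2)] by simp
  qed
  then show "AE t in lborel. norm (h t * mp_weight \<gamma> t) \<le> norm (C * (indicator {0<..4} t / sqrt t))"
    by simp
qed

lemma MP_P_eq_integral:
  assumes "0 < \<gamma>"
  shows "MP_P \<gamma> x k = (\<integral>t. (if x \<le> t then t powr k else 0) * mp_weight \<gamma> t \<partial>lborel) / \<gamma>"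
proof -
  have "indicator {x..gam_plus \<gamma>} t *\<^sub>R (t powr k * mp_density \<gamma> t)
      = (if x \<le> t then t powr k else 0) * mp_weight \<gamma> t / \<gamma>" for t
  proof (cases "0 < mp_quad \<gamma> t")
    case True
    then show ?thesis
      using mp_quad_pos_iff[OF assms] mp_density_eq_mp_weight[OF assms]
      by (auto simp: indicator_def)
  next
    case False
    then have "mp_weight \<gamma> t = 0" unfolding mp_weight_def by simp
    then show ?thesis using mp_density_eq_mp_weight[OF assms] by simp
  qed
  then show ?thesis
    unfolding MP_P_def set_lebesgue_integral_def by simp
qed

lemma integrable_MP_P_integrand:
  assumes "0 \<le> \<gamma>" "\<gamma> \<le> 1" "0 \<le> k"
  shows "integrable lborel (\<lambda>t. (if x \<le> t then t powr k else 0) * mp_weight \<gamma> t)"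
proof (rule integrable_mult_mp_weight[OF assms(1,2)])
  fix t :: real assume "0 < t" "t \<le> 4"
  then show "\<bar>if x \<le> t then t powr k else 0\<bar> \<le> 4 powr k"
    using assms(3) by (auto intro: powr_mono2)
qed measurable

definition mp_hinge :: "real \<Rightarrow> real \<Rightarrow> real" where
  "mp_hinge \<gamma> L = (\<integral>t. max (sqrt t - L) 0 * mp_weight \<gamma> t \<partial>lborel)"

definition mp_hinge_sq :: "real \<Rightarrow> real \<Rightarrow> real" where
  "mp_hinge_sq \<gamma> L = (\<integral>t. (max (sqrt t - L) 0)^2 * mp_weight \<gamma> t \<partial>lborel)"

lemma abs_max_sqrt_diff_le:
  assumes "0 < t" "t \<le> 4"
  shows "\<bar>max (sqrt t - L) 0\<bar> \<le> 2 + \<bar>L\<bar>"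
proof -
  have "sqrt t \<le> 2"
    using real_sqrt_le_mono[OF assms(2)] by simp
  then show ?thesis using assms(1) by (auto simp: max_def)
qed

lemma integrable_mp_hinge:
  assumes "0 \<le> \<gamma>" "\<gamma> \<le> 1"
  shows "integrable lborel (\<lambda>t. max (sqrt t - L) 0 * mp_weight \<gamma> t)"
  by (rule integrable_mult_mp_weight[OF assms _ abs_max_sqrt_diff_le]) auto

lemma integrable_mp_hinge_sq:
  assumes "0 \<le> \<gamma>" "\<gamma> \<le> 1"
  shows "integrable lborel (\<lambda>t. (max (sqrt t - L) 0)^2 * mp_weight \<gamma> t)"
proof (rule integrable_mult_mp_weight[OF assms])
  fix t :: real assume "0 < t" "t \<le> 4"
  then show "\<bar>(max (sqrt t - L) 0)^2\<bar> \<le> (2 + \<bar>L\<bar>)^2"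
    using abs_max_sqrt_diff_le power_mono[of "\<bar>max (sqrt t - L) 0\<bar>" "2 + \<bar>L\<bar>" 2] by simp
qed measurable

lemma max_sqrt_diff_eq:
  assumes "0 \<le> L" "0 \<le> t"
  shows "max (sqrt t - L) 0 = (if L^2 \<le> t then sqrt t - L else 0)"
proof -
  have "L \<le> sqrt t \<longleftrightarrow> L^2 \<le> t"
    using assms real_sqrt_le_iff[of "L^2" t] by simp
  then show ?thesis by (auto simp: max_def)
qed

lemma MP_P_eq_mp_hinge:
  assumes "0 < \<gamma>" "\<gamma> \<le> 1" "0 \<le> L"
  shows "MP_P \<gamma> (L^2) (1/2) - L * MP_P \<gamma> (L^2) 0 = mp_hinge \<gamma> L / \<gamma>"
proof -
  define h where "h k t = (if L^2 \<le> t then t powr k else 0) * mp_weight \<gamma> t" for k t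
  have pointwise: "h (1/2) t - L * h 0 t = max (sqrt t - L) 0 * mp_weight \<gamma> t" for t
  proof (cases "0 < t")
    case True
    then show ?thesis
      using max_sqrt_diff_eq[OF assms(3), of t] by (simp add: h_def powr_half_sqrt algebra_simps)
  next
    case False
    then show ?thesis using mp_weight_eq_0 assms(1,2) by (simp add: h_def)
  qed
  have "integrable lborel (h k)" if "0 \<le> k" for k
    unfolding h_def using integrable_MP_P_integrand assms(1,2) that by simp
  then have "mp_hinge \<gamma> L = integral\<^sup>L lborel (h (1/2)) - L * integral\<^sup>L lborel (h 0)"
    unfolding mp_hinge_def by (simp flip: pointwise)
  moreover have "MP_P \<gamma> (L^2) k = integral\<^sup>L lborel (h k) / \<gamma>" for k
    unfolding MP_P_eq_integral[OF assms(1)] h_def ..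
  ultimately show ?thesis
    by (simp add: diff_divide_distrib)
qed

lemma MP_P_eq_mp_hinge_sq:
  assumes "0 < \<gamma>" "\<gamma> \<le> 1" "0 \<le> L"
  shows "MP_P \<gamma> (L^2) 1 - 2 * L * MP_P \<gamma> (L^2) (1/2) + L^2 * MP_P \<gamma> (L^2) 0
    = mp_hinge_sq \<gamma> L / \<gamma>"
proof -
  define h where "h k t = (if L^2 \<le> t then t powr k else 0) * mp_weight \<gamma> t" for k t
  have pointwise:
    "h 1 t - 2 * L * h (1/2) t + L^2 * h 0 t = (max (sqrt t - L) 0)^2 * mp_weight \<gamma> t" for t
  proof (cases "0 < t")
    case True
    then show ?thesis
      using max_sqrt_diff_eq[OF assms(3), of t]
      by (simp add: h_def powr_half_sqrt power2_diff algebra_simps)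
  next
    case False
    then show ?thesis using mp_weight_eq_0 assms(1,2) by (simp add: h_def)
  qed
  have "integrable lborel (h k)" if "0 \<le> k" for k
    unfolding h_def using integrable_MP_P_integrand assms(1,2) that by simp
  then have "mp_hinge_sq \<gamma> L
      = integral\<^sup>L lborel (h 1) - 2 * L * integral\<^sup>L lborel (h (1/2)) + L^2 * integral\<^sup>L lborel (h 0)"
    unfolding mp_hinge_sq_def by (simp flip: pointwise)
  moreover have "MP_P \<gamma> (L^2) k = integral\<^sup>L lborel (h k) / \<gamma>" for k
    unfolding MP_P_eq_integral[OF assms(1)] h_def ..
  ultimately show ?thesis
    by (simp add: diff_divide_distrib add_divide_distrib)
qed

lemma mp_hinge_nonneg:
  assumes "0 \<le> \<gamma>" "\<gamma> \<le> 1"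
  shows "0 \<le> mp_hinge \<gamma> L"
  unfolding mp_hinge_def using mp_weight_nonneg[OF assms] by (intro Bochner_Integration.integral_nonneg) auto

lemma mp_hinge_antimono:
  assumes "0 \<le> \<gamma>" "\<gamma> \<le> 1" "L\<^sub>1 \<le> L\<^sub>2"
  shows "mp_hinge \<gamma> L\<^sub>2 \<le> mp_hinge \<gamma> L\<^sub>1"
  unfolding mp_hinge_def
proof (rule integral_mono[OF integrable_mp_hinge[OF assms(1,2)] integrable_mp_hinge[OF assms(1,2)]])
  fix t :: real
  show "max (sqrt t - L\<^sub>2) 0 * mp_weight \<gamma> t \<le> max (sqrt t - L\<^sub>1) 0 * mp_weight \<gamma> t"
    using assms(3) mp_weight_nonneg[OF assms(1,2)] by (intro mult_right_mono) auto
qed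

lemma MP_P_diff_antimono:
  assumes "0 < \<gamma>" "\<gamma> \<le> 1" "0 \<le> L\<^sub>1" "L\<^sub>1 \<le> L\<^sub>2"
  shows "MP_P \<gamma> (L\<^sub>2^2) (1/2) - L\<^sub>2 * MP_P \<gamma> (L\<^sub>2^2) 0 \<le> MP_P \<gamma> (L\<^sub>1^2) (1/2) - L\<^sub>1 * MP_P \<gamma> (L\<^sub>1^2) 0"
  using mp_hinge_antimono[of \<gamma> L\<^sub>1 L\<^sub>2] assms
  by (simp add: MP_P_eq_mp_hinge[OF assms(1,2)] divide_right_mono)

lemma mp_hinge_mono:
  assumes "0 \<le> \<gamma>\<^sub>2" "\<gamma>\<^sub>2 \<le> \<gamma>\<^sub>1" "\<gamma>\<^sub>1 \<le> 1"
  shows "mp_hinge \<gamma>\<^sub>2 L \<le> mp_hinge \<gamma>\<^sub>1 L"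
  unfolding mp_hinge_def
proof (rule integral_mono[OF integrable_mp_hinge integrable_mp_hinge])
  fix t :: real
  show "max (sqrt t - L) 0 * mp_weight \<gamma>\<^sub>2 t \<le> max (sqrt t - L) 0 * mp_weight \<gamma>\<^sub>1 t"
    using mp_weight_mono[OF assms] by (intro mult_left_mono) auto
qed (use assms in auto)

lemma mp_hinge_eq_0:
  assumes "0 < \<gamma>" "1 + sqrt \<gamma> \<le> L"
  shows "mp_hinge \<gamma> L = 0"
proof -
  have "max (sqrt t - L) 0 * mp_weight \<gamma> t = 0" for t
  proof (cases "0 < mp_quad \<gamma> t")
    case True
    then have "sqrt t \<le> sqrt (gam_plus \<gamma>)"
      using mp_quad_pos_iff[OF assms(1)] by simp
    also have "\<dots> = 1 + sqrt \<gamma>"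
      unfolding gam_plus_def using assms(1) by simp
    finally show ?thesis using assms(2) by simp
  next
    case False
    then show ?thesis unfolding mp_weight_def by simp
  qed
  then show ?thesis unfolding mp_hinge_def by (simp only:) simp
qed

lemma mp_hinge_pos:
  assumes "0 < \<gamma>" "\<gamma> \<le> 1" "0 \<le> L" "L < 1 + sqrt \<gamma>"
  shows "0 < mp_hinge \<gamma> L"
proof -
  define f where "f t = max (sqrt t - L) 0 * mp_weight \<gamma> t" for t
  define a where "a = max (gam_minus \<gamma>) (L^2)"
  have "L^2 < (1 + sqrt \<gamma>)^2"
    using assms(3,4) by (intro power_strict_mono) auto
  then have "a < gam_plus \<gamma>"
    unfolding a_def gam_plus_def using gam_minus_less_gam_plus[OF assms(1)] gam_plus_def by auto
  have pos: "0 < f t" if t: "a < t" "t < gam_plus \<gamma>" for t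
  proof -
    have "0 \<le> gam_minus \<gamma>" unfolding gam_minus_def by simp
    then have "0 < t" "0 < mp_quad \<gamma> t"
      using t mp_quad_pos_iff[OF assms(1)] unfolding a_def by auto
    moreover have "L < sqrt t"
      using t assms(3) real_less_rsqrt unfolding a_def by auto
    ultimately show ?thesis
      unfolding f_def mp_weight_def using assms(1) by simp
  qed
  have "\<not> (AE t in lborel. t \<notin> {a<..<gam_plus \<gamma>})"
    using \<open>a < gam_plus \<gamma>\<close>
    by (subst AE_iff_measurable[where N = "{a<..<gam_plus \<gamma>}"]) auto
  then have "\<not> (AE t in lborel. f t = 0)"
    by (rule contrapos_nn) (auto elim!: eventually_mono dest: pos)
  moreover have "integrable lborel f" "AE t in lborel. 0 \<le> f t"
    unfolding f_def using integrable_mp_hinge mp_weight_nonneg assms(1,2) by auto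
  ultimately have "integral\<^sup>L lborel f \<noteq> 0"
    by (simp add: integral_nonneg_eq_0_iff_AE)
  moreover have "0 \<le> mp_hinge \<gamma> L"
    using mp_hinge_nonneg assms(1,2) by simp
  ultimately show ?thesis
    unfolding mp_hinge_def f_def by simp
qed

lemma sqrt_mult_mp_weight_le:
  assumes "0 \<le> \<gamma>" "\<gamma> \<le> 1"
  shows "sqrt t * mp_weight \<gamma> t \<le> sqrt \<gamma> * (indicator {0<..4} t / sqrt t)"
proof (cases "0 < t \<and> t \<le> 4")
  case True
  have "\<gamma> * (2 * t + 2) \<le> \<gamma> * 16"
    using True assms by (intro mult_left_mono) auto
  then have "max 0 (mp_quad \<gamma> t) \<le> \<gamma> * 16"
    using mp_quad_le[of \<gamma> t] assms by simp
  then have "sqrt (max 0 (mp_quad \<gamma> t)) \<le> sqrt (\<gamma> * 16)"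
    by (rule real_sqrt_le_mono)
  then have "sqrt (max 0 (mp_quad \<gamma> t)) \<le> sqrt \<gamma> * 4"
    by (simp add: real_sqrt_mult)
  also have "\<dots> \<le> sqrt \<gamma> * (2 * pi)"
    using pi_ge_two assms by (intro mult_left_mono) auto
  finally have "sqrt (max 0 (mp_quad \<gamma> t)) / (2 * pi * sqrt t) \<le> sqrt \<gamma> * (2 * pi) / (2 * pi * sqrt t)"
    using True by (intro divide_right_mono) auto
  moreover have "sqrt t * mp_weight \<gamma> t = sqrt (max 0 (mp_quad \<gamma> t)) / (2 * pi * sqrt t)"
  proof -
    have "sqrt t * mp_weight \<gamma> t
        = sqrt t * sqrt (max 0 (mp_quad \<gamma> t)) / (2 * pi * (sqrt t * sqrt t))"
      unfolding mp_weight_def using True by simp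
    also have "\<dots> = sqrt (max 0 (mp_quad \<gamma> t)) / (2 * pi * sqrt t)"
      using True by (simp add: divide_simps)
    finally show ?thesis .
  qed
  ultimately show ?thesis using True by simp
next
  case False
  then show ?thesis using mp_weight_eq_0[OF assms] by simp
qed

lemma mp_hinge_le_sqrt:
  obtains C where "\<And>\<gamma> L. 0 \<le> \<gamma> \<Longrightarrow> \<gamma> \<le> 1 \<Longrightarrow> 0 \<le> L \<Longrightarrow> mp_hinge \<gamma> L \<le> C * sqrt \<gamma>"
proof
  fix \<gamma> L :: real assume \<gamma>: "0 \<le> \<gamma>" "\<gamma> \<le> 1" and "0 \<le> L"
  have "mp_hinge \<gamma> L \<le> (\<integral>t. sqrt \<gamma> * (indicator {0<..4} t / sqrt t) \<partial>lborel)"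
    unfolding mp_hinge_def
  proof (rule integral_mono[OF integrable_mp_hinge[OF \<gamma>]])
    show "integrable lborel (\<lambda>t. sqrt \<gamma> * (indicator {0<..4} t / sqrt t))"
      by (intro integrable_mult_right integrable_inverse_sqrt)
    fix t :: real
    have "max (sqrt t - L) 0 * mp_weight \<gamma> t \<le> sqrt t * mp_weight \<gamma> t"
    proof (cases "0 < t")
      case True
      then show ?thesis
        using \<open>0 \<le> L\<close> mp_weight_nonneg[OF \<gamma>] by (intro mult_right_mono) auto
    next
      case False
      then show ?thesis using mp_weight_eq_0[OF \<gamma>] by simp
    qed
    also have "\<dots> \<le> sqrt \<gamma> * (indicator {0<..4} t / sqrt t)"
      by (rule sqrt_mult_mp_weight_le[OF \<gamma>])
    finally show "max (sqrt t - L) 0 * mp_weight \<gamma> t \<le> sqrt \<gamma> * (indicator {0<..4} t / sqrt t)" .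
  qed
  also have "\<dots> = (\<integral>t. indicator {0<..4} t / sqrt t \<partial>lborel) * sqrt \<gamma>"
    by (simp only: integral_mult_right_zero mult.commute)
  finally show "mp_hinge \<gamma> L \<le> (\<integral>t. indicator {0<..4} t / sqrt t \<partial>lborel) * sqrt \<gamma>" .
qed

lemma mp_hinge_lipschitz:
  assumes "0 \<le> \<gamma>" "\<gamma> \<le> 1"
  shows "\<bar>mp_hinge \<gamma> L\<^sub>1 - mp_hinge \<gamma> L\<^sub>2\<bar> \<le> (\<integral>t. mp_weight \<gamma> t \<partial>lborel) * \<bar>L\<^sub>1 - L\<^sub>2\<bar>"
proof -
  have "integrable lborel (mp_weight \<gamma>)"
    using integrable_mult_mp_weight[OF assms, of "\<lambda>_. 1" 1] by simp
  have pointwise: "\<bar>max (sqrt t - L\<^sub>1) 0 * mp_weight \<gamma> t - max (sqrt t - L\<^sub>2) 0 * mp_weight \<gamma> t\<bar>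
      \<le> \<bar>L\<^sub>1 - L\<^sub>2\<bar> * mp_weight \<gamma> t" for t
  proof -
    have "\<bar>max (sqrt t - L\<^sub>1) 0 - max (sqrt t - L\<^sub>2) 0\<bar> \<le> \<bar>L\<^sub>1 - L\<^sub>2\<bar>"
      by (auto simp: max_def)
    then show ?thesis
      using mp_weight_nonneg[OF assms, of t]
      by (simp add: abs_mult mult_right_mono flip: left_diff_distrib)
  qed
  note integrable = integrable_mp_hinge[OF assms] \<open>integrable lborel (mp_weight \<gamma>)\<close>
  have "\<bar>mp_hinge \<gamma> L\<^sub>1 - mp_hinge \<gamma> L\<^sub>2\<bar>
      = \<bar>\<integral>t. max (sqrt t - L\<^sub>1) 0 * mp_weight \<gamma> t - max (sqrt t - L\<^sub>2) 0 * mp_weight \<gamma> t \<partial>lborel\<bar>"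
    unfolding mp_hinge_def using integrable by simp
  also have "\<dots> \<le> (\<integral>t. \<bar>max (sqrt t - L\<^sub>1) 0 * mp_weight \<gamma> t - max (sqrt t - L\<^sub>2) 0 * mp_weight \<gamma> t\<bar> \<partial>lborel)"
    by (rule integral_abs_bound)
  also have "\<dots> \<le> (\<integral>t. \<bar>L\<^sub>1 - L\<^sub>2\<bar> * mp_weight \<gamma> t \<partial>lborel)"
    using pointwise integrable by (intro integral_mono) auto
  finally show ?thesis by (simp add: mult.commute)
qed

lemma continuous_on_mp_hinge:
  assumes "0 \<le> \<gamma>" "\<gamma> \<le> 1"
  shows "continuous_on S (mp_hinge \<gamma>)"
proof (rule lipschitz_on_continuous_on[OF lipschitz_onI])
  show "0 \<le> (\<integral>t. mp_weight \<gamma> t \<partial>lborel)"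
    using mp_weight_nonneg[OF assms] by (intro Bochner_Integration.integral_nonneg) auto
  show "dist (mp_hinge \<gamma> x) (mp_hinge \<gamma> y) \<le> (\<integral>t. mp_weight \<gamma> t \<partial>lborel) * dist x y" for x y
    using mp_hinge_lipschitz[OF assms] by (simp add: dist_real_def)
qed

lemma pos_part_sq_tangent_le:
  fixes x y :: real
  shows "(max x 0)^2 + 2 * max x 0 * (y - x) \<le> (max y 0)^2"
proof (cases "x \<le> 0")
  case False
  have "0 \<le> (y - x)^2" by simp
  then have "x^2 + 2 * x * (y - x) \<le> y^2"
    by (simp add: power2_eq_square algebra_simps)
  moreover have "x^2 + 2 * x * (y - x) \<le> 0" if "y \<le> 0"
    using False that mult_nonneg_nonpos[of x y] by (simp add: power2_eq_square algebra_simps)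
  ultimately show ?thesis
    using False by (auto simp: max_def)
qed (simp add: max_def)

lemma mp_hinge_sq_tangent_le:
  assumes "0 \<le> \<gamma>" "\<gamma> \<le> 1"
  shows "mp_hinge_sq \<gamma> L\<^sub>0 - 2 * (L - L\<^sub>0) * mp_hinge \<gamma> L\<^sub>0 \<le> mp_hinge_sq \<gamma> L"
proof -
  have "mp_hinge_sq \<gamma> L\<^sub>0 - 2 * (L - L\<^sub>0) * mp_hinge \<gamma> L\<^sub>0
      = (\<integral>t. ((max (sqrt t - L\<^sub>0) 0)^2 - 2 * (L - L\<^sub>0) * max (sqrt t - L\<^sub>0) 0) * mp_weight \<gamma> t \<partial>lborel)"
    unfolding mp_hinge_sq_def mp_hinge_def
    using integrable_mp_hinge[OF assms] integrable_mp_hinge_sq[OF assms]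
    by (simp add: left_diff_distrib mult.assoc)
  also have "\<dots> \<le> mp_hinge_sq \<gamma> L"
    unfolding mp_hinge_sq_def
  proof (rule integral_mono)
    show "integrable lborel
        (\<lambda>t. ((max (sqrt t - L\<^sub>0) 0)^2 - 2 * (L - L\<^sub>0) * max (sqrt t - L\<^sub>0) 0) * mp_weight \<gamma> t)"
      using integrable_mp_hinge[OF assms] integrable_mp_hinge_sq[OF assms]
      by (simp add: left_diff_distrib mult.assoc)
    fix t
    show "((max (sqrt t - L\<^sub>0) 0)^2 - 2 * (L - L\<^sub>0) * max (sqrt t - L\<^sub>0) 0) * mp_weight \<gamma> t
        \<le> (max (sqrt t - L) 0)^2 * mp_weight \<gamma> t"
      using pos_part_sq_tangent_le[of "sqrt t - L\<^sub>0" "sqrt t - L"] mp_weight_nonneg[OF assms, of t]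
      by (intro mult_right_mono) (auto simp: algebra_simps)
  qed (rule integrable_mp_hinge_sq[OF assms])
  finally show ?thesis .
qed

text \<open>The first-order condition for minimising \<open>r L\<^sup>2 + c mp_hinge_sq \<gamma> L\<close> over \<open>L \<ge> 0\<close>:
  the derivative of \<open>mp_hinge_sq \<gamma>\<close> is \<open>-2 mp_hinge \<gamma>\<close>.\<close>
definition hinge_root :: "real \<Rightarrow> real \<Rightarrow> real \<Rightarrow> real \<Rightarrow> bool" where
  "hinge_root \<gamma> c r L \<longleftrightarrow> 0 \<le> L \<and> c * mp_hinge \<gamma> L = r * L"

lemma hinge_root_exists:
  assumes "0 < \<gamma>" "\<gamma> \<le> 1" "0 < c" "0 < r"
  shows "\<exists>L. hinge_root \<gamma> c r L"
proof -
  let ?f = "\<lambda>L. c * mp_hinge \<gamma> L - r * L"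
  have "continuous_on {0..2} ?f"
    using continuous_on_mp_hinge assms(1,2) by (intro continuous_intros) auto
  moreover have "?f 2 \<le> 0"
    using mp_hinge_eq_0[OF assms(1)] assms by simp
  moreover have "0 \<le> ?f 0"
    using mp_hinge_nonneg[of \<gamma> 0] assms by simp
  ultimately obtain L where "0 \<le> L" "?f L = 0"
    using IVT2'[of ?f 2 0 0] by auto
  then show ?thesis unfolding hinge_root_def by auto
qed

lemma hinge_root_le:
  assumes "0 < \<gamma>" "0 < r" "hinge_root \<gamma> c r L"
  shows "L \<le> 1 + sqrt \<gamma>"
proof (rule ccontr)
  assume "\<not> ?thesis"
  then have "mp_hinge \<gamma> L = 0"
    using mp_hinge_eq_0[OF assms(1)] by simp
  moreover have "0 < L"
    using \<open>\<not> L \<le> 1 + sqrt \<gamma>\<close> real_sqrt_ge_zero[of \<gamma>] assms(1) by linarith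
  ultimately show False
    using assms(2,3) unfolding hinge_root_def by simp
qed

lemma hinge_root_minimises:
  assumes "0 \<le> \<gamma>" "\<gamma> \<le> 1" "0 \<le> c" "hinge_root \<gamma> c r L\<^sub>0"
  shows "r * L\<^sub>0^2 + c * mp_hinge_sq \<gamma> L\<^sub>0 + r * (L - L\<^sub>0)^2 \<le> r * L^2 + c * mp_hinge_sq \<gamma> L"
proof -
  have "c * (mp_hinge_sq \<gamma> L\<^sub>0 - 2 * (L - L\<^sub>0) * mp_hinge \<gamma> L\<^sub>0) \<le> c * mp_hinge_sq \<gamma> L"
    using mp_hinge_sq_tangent_le[OF assms(1,2)] assms(3) by (rule mult_left_mono)
  moreover have "c * (mp_hinge_sq \<gamma> L\<^sub>0 - 2 * (L - L\<^sub>0) * mp_hinge \<gamma> L\<^sub>0)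
      = c * mp_hinge_sq \<gamma> L\<^sub>0 - 2 * (L - L\<^sub>0) * (c * mp_hinge \<gamma> L\<^sub>0)"
    by (simp add: algebra_simps)
  moreover have "c * mp_hinge \<gamma> L\<^sub>0 = r * L\<^sub>0"
    using assms(4) unfolding hinge_root_def by simp
  ultimately have "c * mp_hinge_sq \<gamma> L\<^sub>0 - 2 * (L - L\<^sub>0) * (r * L\<^sub>0) \<le> c * mp_hinge_sq \<gamma> L"
    by simp
  moreover have "r * L\<^sub>0^2 + r * (L - L\<^sub>0)^2 = r * L^2 - 2 * (L - L\<^sub>0) * (r * L\<^sub>0)"
    by (simp add: power2_eq_square algebra_simps)
  ultimately show ?thesis by linarith
qed

lemma hinge_root_unique:
  assumes "0 < \<gamma>" "\<gamma> \<le> 1" "0 < c" "0 < r"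
  shows "\<exists>!L. hinge_root \<gamma> c r L"
proof -
  have "L\<^sub>1 = L\<^sub>2" if "hinge_root \<gamma> c r L\<^sub>1" "hinge_root \<gamma> c r L\<^sub>2" for L\<^sub>1 L\<^sub>2
  proof -
    have "r * (L\<^sub>1 - L\<^sub>2)^2 \<le> 0"
      using hinge_root_minimises[OF _ assms(2) _ that(1), of L\<^sub>2]
        hinge_root_minimises[OF _ assms(2) _ that(2), of L\<^sub>1] assms
      by (simp add: power2_commute[of L\<^sub>2])
    then show ?thesis
      using assms(4) by (simp add: mult_le_0_iff)
  qed
  then show ?thesis
    using hinge_root_exists[OF assms] by blast
qed

lemma minimiser_iff_hinge_root:
  assumes "0 < \<gamma>" "\<gamma> \<le> 1" "0 < c" "0 < r"
  shows "(0 \<le> L \<and> (\<forall>L'\<ge>0. r * L^2 + c * mp_hinge_sq \<gamma> L \<le> r * L'^2 + c * mp_hinge_sq \<gamma> L'))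
    \<longleftrightarrow> hinge_root \<gamma> c r L"
proof
  assume min: "0 \<le> L \<and> (\<forall>L'\<ge>0. r * L^2 + c * mp_hinge_sq \<gamma> L \<le> r * L'^2 + c * mp_hinge_sq \<gamma> L')"
  obtain L\<^sub>0 where root: "hinge_root \<gamma> c r L\<^sub>0"
    using hinge_root_exists[OF assms] by blast
  then have "r * (L - L\<^sub>0)^2 \<le> 0"
    using hinge_root_minimises[OF _ assms(2) _ root, of L] min assms unfolding hinge_root_def by force
  then have "L = L\<^sub>0"
    using assms(4) by (simp add: mult_le_0_iff)
  then show "hinge_root \<gamma> c r L" using root by simp
next
  assume root: "hinge_root \<gamma> c r L"
  have "r * L^2 + c * mp_hinge_sq \<gamma> L \<le> r * L'^2 + c * mp_hinge_sq \<gamma> L'" for L'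
    using hinge_root_minimises[OF _ assms(2) _ root, of L'] assms zero_le_power2[of "L' - L"]
      mult_nonneg_nonneg[of r "(L' - L)^2"] by linarith
  then show "0 \<le> L \<and> (\<forall>L'\<ge>0. r * L^2 + c * mp_hinge_sq \<gamma> L \<le> r * L'^2 + c * mp_hinge_sq \<gamma> L')"
    using root unfolding hinge_root_def by simp
qed

lemma hinge_root_antimono:
  assumes "0 \<le> \<gamma>\<^sub>2" "\<gamma>\<^sub>2 \<le> \<gamma>\<^sub>1" "\<gamma>\<^sub>1 \<le> 1" "0 \<le> c\<^sub>2" "c\<^sub>2 \<le> c\<^sub>1" "0 < r\<^sub>1" "r\<^sub>1 \<le> r\<^sub>2"
    and roots: "hinge_root \<gamma>\<^sub>1 c\<^sub>1 r\<^sub>1 L\<^sub>1" "hinge_root \<gamma>\<^sub>2 c\<^sub>2 r\<^sub>2 L\<^sub>2"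
  shows "L\<^sub>2 \<le> L\<^sub>1"
proof (rule ccontr)
  assume "\<not> L\<^sub>2 \<le> L\<^sub>1"
  then have less: "L\<^sub>1 < L\<^sub>2" by simp
  have "r\<^sub>2 * L\<^sub>2 = c\<^sub>2 * mp_hinge \<gamma>\<^sub>2 L\<^sub>2"
    using roots(2) unfolding hinge_root_def by simp
  also have "\<dots> \<le> c\<^sub>2 * mp_hinge \<gamma>\<^sub>2 L\<^sub>1"
    using mp_hinge_antimono[of \<gamma>\<^sub>2 L\<^sub>1 L\<^sub>2] less assms by (intro mult_left_mono) auto
  also have "\<dots> \<le> c\<^sub>2 * mp_hinge \<gamma>\<^sub>1 L\<^sub>1"
    using mp_hinge_mono[of \<gamma>\<^sub>2 \<gamma>\<^sub>1 L\<^sub>1] assms by (intro mult_left_mono) auto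
  also have "\<dots> \<le> c\<^sub>1 * mp_hinge \<gamma>\<^sub>1 L\<^sub>1"
    using mp_hinge_nonneg[of \<gamma>\<^sub>1 L\<^sub>1] assms by (intro mult_right_mono) auto
  also have "\<dots> = r\<^sub>1 * L\<^sub>1"
    using roots(1) unfolding hinge_root_def by simp
  also have "\<dots> < r\<^sub>1 * L\<^sub>2"
    using less assms(6) by simp
  also have "\<dots> \<le> r\<^sub>2 * L\<^sub>2"
    using less roots(1) assms(7) unfolding hinge_root_def by (intro mult_right_mono) auto
  finally show False by simp
qed

lemma beta_rho_less_1:
  fixes \<beta> \<rho> :: real
  assumes "0 \<le> \<rho>" "\<rho> < 1" "\<beta> \<le> 1"
  shows "\<beta> * \<rho> < 1"
  using assms mult_right_mono[of \<beta> 1 \<rho>] by simp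

lemma MPgamma_beta:
  assumes "0 < \<rho>" "\<rho> < 1" "\<beta> \<le> 1"
  shows "MPgamma \<rho> (\<beta> * \<rho>) = \<beta> * (1 - \<rho>) / (1 - \<beta> * \<rho>)"
proof -
  have "MPgamma \<rho> (\<beta> * \<rho>) = (\<rho> * (\<beta> * (1 - \<rho>))) / (\<rho> * (1 - \<beta> * \<rho>))"
    unfolding MPgamma_def by (simp add: algebra_simps)
  then show ?thesis
    using assms(1) by simp
qed

lemma MPgamma_beta_bounds:
  assumes "0 < \<rho>" "\<rho> < 1" "0 < \<beta>" "\<beta> \<le> 1"
  shows "0 < MPgamma \<rho> (\<beta> * \<rho>)" "MPgamma \<rho> (\<beta> * \<rho>) \<le> \<beta>"
proof -
  have pos: "0 < 1 - \<beta> * \<rho>"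
    using beta_rho_less_1[of \<rho> \<beta>] assms by simp
  then show "0 < MPgamma \<rho> (\<beta> * \<rho>)"
    unfolding MPgamma_beta[OF assms(1,2,4)] using assms by simp
  have "\<beta> * (1 - \<rho>) \<le> \<beta> * (1 - \<beta> * \<rho>)"
    using assms mult_left_le_one_le[of \<rho> \<beta>] by (intro mult_left_mono) auto
  then show "MPgamma \<rho> (\<beta> * \<rho>) \<le> \<beta>"
    unfolding MPgamma_beta[OF assms(1,2,4)] using pos by (simp add: divide_le_eq)
qed

lemma MPgamma_beta_antimono:
  assumes "0 < \<rho>\<^sub>1" "\<rho>\<^sub>1 \<le> \<rho>\<^sub>2" "\<rho>\<^sub>2 < 1" "0 < \<beta>" "\<beta> \<le> 1"
  shows "MPgamma \<rho>\<^sub>2 (\<beta> * \<rho>\<^sub>2) \<le> MPgamma \<rho>\<^sub>1 (\<beta> * \<rho>\<^sub>1)"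
proof -
  have "0 < 1 - \<beta> * \<rho>\<^sub>1" "0 < 1 - \<beta> * \<rho>\<^sub>2"
    using beta_rho_less_1[of _ \<beta>] assms by simp_all
  moreover have "(1 - \<beta>) * \<rho>\<^sub>1 \<le> (1 - \<beta>) * \<rho>\<^sub>2"
    using assms by (intro mult_left_mono) auto
  then have "\<beta> * ((1 - \<rho>\<^sub>2) * (1 - \<beta> * \<rho>\<^sub>1)) \<le> \<beta> * ((1 - \<rho>\<^sub>1) * (1 - \<beta> * \<rho>\<^sub>2))"
    using assms by (intro mult_left_mono) (auto simp: algebra_simps)
  ultimately show ?thesis
    using assms by (simp add: MPgamma_beta divide_simps algebra_simps)
qed

lemma tendsto_MPgamma_beta_at_right_0:
  assumes "0 < \<beta>" "\<beta> \<le> 1"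
  shows "((\<lambda>\<rho>. MPgamma \<rho> (\<beta> * \<rho>)) \<longlongrightarrow> \<beta>) (at_right 0)"
proof -
  have "((\<lambda>\<rho>. \<beta> * (1 - \<rho>) / (1 - \<beta> * \<rho>)) \<longlongrightarrow> \<beta> * (1 - 0) / (1 - \<beta> * 0)) (at_right 0)"
    by (intro tendsto_intros) auto
  moreover have "eventually (\<lambda>\<rho>. \<beta> * (1 - \<rho>) / (1 - \<beta> * \<rho>) = MPgamma \<rho> (\<beta> * \<rho>)) (at_right 0)"
    using eventually_at_right_real[of 0 1]
    by (rule eventually_mono) (use assms MPgamma_beta in auto)
  ultimately show ?thesis
    by (simp add: tendsto_cong)
qed

abbreviation Lstar_root :: "real \<Rightarrow> real \<Rightarrow> real \<Rightarrow> real \<Rightarrow> bool" where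
  "Lstar_root \<alpha> \<beta> \<rho> \<equiv> hinge_root (MPgamma \<rho> (\<beta> * \<rho>)) (\<alpha> * (1 - \<beta> * \<rho>) / \<beta>) \<rho>"

lemma Mfun_eq_mp_hinge_sq:
  assumes "0 < \<rho>" "\<rho> < 1" "0 < \<beta>" "\<beta> \<le> 1" "0 \<le> L"
  shows "Mfun L \<rho> (\<beta> * \<rho>) \<alpha> = \<rho> + \<beta> * \<rho> - \<rho> * (\<beta> * \<rho>)
    + (1 - \<beta> * \<rho>) * (\<rho> * L^2 + \<alpha> * (1 - \<beta> * \<rho>) / \<beta> * mp_hinge_sq (MPgamma \<rho> (\<beta> * \<rho>)) L)"
proof -
  let ?\<gamma> = "MPgamma \<rho> (\<beta> * \<rho>)"
  have \<gamma>: "0 < ?\<gamma>" "?\<gamma> \<le> 1"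
    using MPgamma_beta_bounds[OF assms(1-4)] assms(4) by auto
  have "\<alpha> * (1 - \<rho>) * (mp_hinge_sq ?\<gamma> L / ?\<gamma>) = \<alpha> * (1 - \<beta> * \<rho>) / \<beta> * mp_hinge_sq ?\<gamma> L"
    using beta_rho_less_1[of \<rho> \<beta>] assms unfolding MPgamma_beta[OF assms(1,2,4)]
    by (simp add: field_simps)
  then show ?thesis
    unfolding Mfun_def Let_def MP_P_eq_mp_hinge_sq[OF \<gamma> assms(5)] by simp
qed

lemma Mfun_minimiser_iff_Lstar_root:
  assumes "0 < \<alpha>" "0 < \<rho>" "\<rho> < 1" "0 < \<beta>" "\<beta> \<le> 1"
  shows "(0 \<le> L \<and> (\<forall>L'\<ge>0. Mfun L \<rho> (\<beta> * \<rho>) \<alpha> \<le> Mfun L' \<rho> (\<beta> * \<rho>) \<alpha>))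
    \<longleftrightarrow> Lstar_root \<alpha> \<beta> \<rho> L"
proof -
  let ?\<gamma> = "MPgamma \<rho> (\<beta> * \<rho>)" and ?c = "\<alpha> * (1 - \<beta> * \<rho>) / \<beta>"
  have d: "0 < 1 - \<beta> * \<rho>"
    using beta_rho_less_1[of \<rho> \<beta>] assms by simp
  have "Mfun L \<rho> (\<beta> * \<rho>) \<alpha> \<le> Mfun L' \<rho> (\<beta> * \<rho>) \<alpha>
      \<longleftrightarrow> \<rho> * L^2 + ?c * mp_hinge_sq ?\<gamma> L \<le> \<rho> * L'^2 + ?c * mp_hinge_sq ?\<gamma> L'"
    if "0 \<le> L" "0 \<le> L'" for L L'
    unfolding Mfun_eq_mp_hinge_sq[OF assms(2-5) that(1)] Mfun_eq_mp_hinge_sq[OF assms(2-5) that(2)]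
    using d by simp
  then have "(0 \<le> L \<and> (\<forall>L'\<ge>0. Mfun L \<rho> (\<beta> * \<rho>) \<alpha> \<le> Mfun L' \<rho> (\<beta> * \<rho>) \<alpha>))
      \<longleftrightarrow> (0 \<le> L \<and> (\<forall>L'\<ge>0. \<rho> * L^2 + ?c * mp_hinge_sq ?\<gamma> L \<le> \<rho> * L'^2 + ?c * mp_hinge_sq ?\<gamma> L'))"
    by blast
  also have "\<dots> \<longleftrightarrow> Lstar_root \<alpha> \<beta> \<rho> L"
    using MPgamma_beta_bounds[OF assms(2-5)] assms d
    by (intro minimiser_iff_hinge_root) auto
  finally show ?thesis .
qed

lemma Lstar_root_iff:
  assumes "0 < \<alpha>" "0 < \<rho>" "\<rho> < 1" "0 < \<beta>" "\<beta> \<le> 1"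
  shows "Lstar_root \<alpha> \<beta> \<rho> L \<longleftrightarrow> L = Lstar \<rho> \<beta> \<alpha>"
proof -
  have "\<exists>!L. Lstar_root \<alpha> \<beta> \<rho> L"
    using MPgamma_beta_bounds[OF assms(2-5)] assms beta_rho_less_1[of \<rho> \<beta>]
    by (intro hinge_root_unique) auto
  moreover have "Lstar \<rho> \<beta> \<alpha> = (THE L. Lstar_root \<alpha> \<beta> \<rho> L)"
    unfolding Lstar_def Mfun_minimiser_iff_Lstar_root[OF assms] using assms(2,3) by simp
  ultimately show ?thesis
    by (metis theI')
qed

lemma MP_P_equation_iff_Lstar_root:
  assumes "0 < \<alpha>" "0 < \<rho>" "\<rho> < 1" "0 < \<beta>" "\<beta> \<le> 1" "0 \<le> L"
  shows "MP_P (MPgamma \<rho> (\<beta> * \<rho>)) (L^2) (1/2) - L * MP_P (MPgamma \<rho> (\<beta> * \<rho>)) (L^2) 0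
      = L * \<rho> / (\<alpha> * (1 - \<rho>))
    \<longleftrightarrow> Lstar_root \<alpha> \<beta> \<rho> L"
proof -
  let ?\<gamma> = "MPgamma \<rho> (\<beta> * \<rho>)"
  have \<gamma>: "0 < ?\<gamma>" "?\<gamma> \<le> 1"
    using MPgamma_beta_bounds[OF assms(2-5)] assms(5) by auto
  have "\<alpha> * (1 - \<rho>) / ?\<gamma> = \<alpha> * (1 - \<beta> * \<rho>) / \<beta>"
    using beta_rho_less_1[of \<rho> \<beta>] assms unfolding MPgamma_beta[OF assms(2,3,5)] by (simp add: field_simps)
  moreover have "mp_hinge ?\<gamma> L / ?\<gamma> = L * \<rho> / (\<alpha> * (1 - \<rho>))
      \<longleftrightarrow> \<alpha> * (1 - \<rho>) / ?\<gamma> * mp_hinge ?\<gamma> L = \<rho> * L"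
    using \<gamma> assms by (auto simp: field_simps)
  ultimately show ?thesis
    unfolding MP_P_eq_mp_hinge[OF \<gamma> assms(6)] hinge_root_def using assms(6) by simp
qed

lemma Mfun_unique_minimiser:
  assumes "0 < \<alpha>" "0 < \<rho>" "\<rho> < 1" "0 < \<beta>" "\<beta> \<le> 1"
  shows "\<exists>!L. 0 \<le> L \<and> (\<forall>L'\<ge>0. Mfun L \<rho> (\<beta> * \<rho>) \<alpha> \<le> Mfun L' \<rho> (\<beta> * \<rho>) \<alpha>)"
  unfolding Mfun_minimiser_iff_Lstar_root[OF assms] Lstar_root_iff[OF assms] by simp

lemma MP_P_equation_iff_Lstar:
  assumes "0 < \<alpha>" "0 < \<rho>" "\<rho> < 1" "0 < \<beta>" "\<beta> \<le> 1" "0 \<le> L"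
  shows "MP_P (MPgamma \<rho> (\<beta> * \<rho>)) (L^2) (1/2) - L * MP_P (MPgamma \<rho> (\<beta> * \<rho>)) (L^2) 0
      = L * \<rho> / (\<alpha> * (1 - \<rho>))
    \<longleftrightarrow> L = Lstar \<rho> \<beta> \<alpha>"
  unfolding MP_P_equation_iff_Lstar_root[OF assms] Lstar_root_iff[OF assms(1-5)] ..

lemma Lstar_0: "Lstar 0 \<beta> \<alpha> = 1 + sqrt \<beta>"
  and Lstar_1: "Lstar 1 \<beta> \<alpha> = 0"
  unfolding Lstar_def by simp_all

lemma Lstar_bounds:
  assumes "0 < \<alpha>" "0 \<le> \<rho>" "\<rho> \<le> 1" "0 < \<beta>" "\<beta> \<le> 1"
  shows "0 \<le> Lstar \<rho> \<beta> \<alpha>" "Lstar \<rho> \<beta> \<alpha> \<le> 1 + sqrt \<beta>"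
proof -
  have "0 \<le> Lstar \<rho> \<beta> \<alpha> \<and> Lstar \<rho> \<beta> \<alpha> \<le> 1 + sqrt \<beta>"
  proof (cases "\<rho> = 0 \<or> \<rho> = 1")
    case True
    then show ?thesis using assms(4) by (auto simp: Lstar_0 Lstar_1)
  next
    case False
    then have \<rho>: "0 < \<rho>" "\<rho> < 1" using assms(2,3) by auto
    have root: "Lstar_root \<alpha> \<beta> \<rho> (Lstar \<rho> \<beta> \<alpha>)"
      using Lstar_root_iff[OF assms(1) \<rho> assms(4,5)] by simp
    then have "0 \<le> Lstar \<rho> \<beta> \<alpha>"
      unfolding hinge_root_def by simp
    moreover have "Lstar \<rho> \<beta> \<alpha> \<le> 1 + sqrt (MPgamma \<rho> (\<beta> * \<rho>))"
      using hinge_root_le[OF _ _ root] MPgamma_beta_bounds[OF \<rho> assms(4,5)] \<rho> by simp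
    moreover have "sqrt (MPgamma \<rho> (\<beta> * \<rho>)) \<le> sqrt \<beta>"
      using MPgamma_beta_bounds[OF \<rho> assms(4,5)] by simp
    ultimately show ?thesis by linarith
  qed
  then show "0 \<le> Lstar \<rho> \<beta> \<alpha>" "Lstar \<rho> \<beta> \<alpha> \<le> 1 + sqrt \<beta>" by auto
qed

lemma Lstar_antimono:
  assumes "0 < \<alpha>" "0 < \<beta>" "\<beta> \<le> 1" "0 \<le> \<rho>\<^sub>1" "\<rho>\<^sub>1 \<le> \<rho>\<^sub>2" "\<rho>\<^sub>2 \<le> 1"
  shows "Lstar \<rho>\<^sub>2 \<beta> \<alpha> \<le> Lstar \<rho>\<^sub>1 \<beta> \<alpha>"
proof -
  consider "\<rho>\<^sub>1 = 0" | "\<rho>\<^sub>2 = 1" | "0 < \<rho>\<^sub>1" "\<rho>\<^sub>2 < 1"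
    using assms by linarith
  then show ?thesis
  proof cases
    case 1
    then show ?thesis
      using Lstar_bounds(2)[of \<alpha> \<rho>\<^sub>2 \<beta>] assms by (simp add: Lstar_0)
  next
    case 2
    then show ?thesis
      using Lstar_bounds(1)[of \<alpha> \<rho>\<^sub>1 \<beta>] assms by (simp add: Lstar_1)
  next
    case 3
    then have \<rho>: "0 < \<rho>\<^sub>1" "\<rho>\<^sub>1 < 1" "0 < \<rho>\<^sub>2" "\<rho>\<^sub>2 < 1"
      using assms(5) by linarith+
    have "Lstar_root \<alpha> \<beta> \<rho>\<^sub>1 (Lstar \<rho>\<^sub>1 \<beta> \<alpha>)" "Lstar_root \<alpha> \<beta> \<rho>\<^sub>2 (Lstar \<rho>\<^sub>2 \<beta> \<alpha>)"
      using Lstar_root_iff[OF assms(1) _ _ assms(2,3)] \<rho> by simp_all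
    moreover have "\<alpha> * (1 - \<beta> * \<rho>\<^sub>2) / \<beta> \<le> \<alpha> * (1 - \<beta> * \<rho>\<^sub>1) / \<beta>"
      using assms by (intro divide_right_mono mult_left_mono) auto
    moreover have "0 \<le> \<alpha> * (1 - \<beta> * \<rho>\<^sub>2) / \<beta>"
      using beta_rho_less_1[of \<rho>\<^sub>2 \<beta>] assms \<rho> by simp
    moreover have "0 \<le> MPgamma \<rho>\<^sub>2 (\<beta> * \<rho>\<^sub>2)" "MPgamma \<rho>\<^sub>1 (\<beta> * \<rho>\<^sub>1) \<le> 1"
      using MPgamma_beta_bounds[OF _ _ assms(2,3)] \<rho> assms(3) by (auto intro: less_imp_le order_trans)
    ultimately show ?thesis
      using hinge_root_antimono MPgamma_beta_antimono[OF \<rho>(1) assms(5) \<rho>(4) assms(2,3)] \<rho>(1) assms(5)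
      by blast
  qed
qed

text \<open>The factor \<open>(1 - \<beta>\<rho>) sqrt \<gamma>\<close> is rewritten as \<open>sqrt ((1 - \<beta>\<rho>) \<beta> (1 - \<rho>))\<close>, which
  tends to 0 as \<open>\<rho> \<rightarrow> 1\<close> even for \<open>\<beta> = 1\<close>, where \<open>\<gamma> = 1\<close> throughout.\<close>
lemma Lstar_le_of_mp_hinge_le:
  assumes "0 < \<alpha>" "0 < \<beta>" "\<beta> \<le> 1" "0 < \<rho>" "\<rho> < 1"
    and "mp_hinge (MPgamma \<rho> (\<beta> * \<rho>)) (Lstar \<rho> \<beta> \<alpha>) \<le> C * sqrt (MPgamma \<rho> (\<beta> * \<rho>))"
  shows "Lstar \<rho> \<beta> \<alpha> \<le> \<alpha> * C * sqrt ((1 - \<beta> * \<rho>) * \<beta> * (1 - \<rho>)) / (\<beta> * \<rho>)"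
proof -
  let ?\<gamma> = "MPgamma \<rho> (\<beta> * \<rho>)" and ?L = "Lstar \<rho> \<beta> \<alpha>"
  have d: "0 < 1 - \<beta> * \<rho>"
    using beta_rho_less_1[of \<rho> \<beta>] assms by simp
  have "\<beta> * \<rho> * ?L = \<alpha> * (1 - \<beta> * \<rho>) * mp_hinge ?\<gamma> ?L"
    using Lstar_root_iff[OF assms(1,4,5,2,3), of ?L] assms(2) unfolding hinge_root_def
    by (simp add: field_simps)
  also have "\<dots> \<le> \<alpha> * (1 - \<beta> * \<rho>) * (C * sqrt ?\<gamma>)"
    using assms(1,6) d by (intro mult_left_mono) auto
  also have "\<dots> = \<alpha> * C * sqrt ((1 - \<beta> * \<rho>)^2 * ?\<gamma>)"
    using d by (simp add: real_sqrt_mult)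
  also have "(1 - \<beta> * \<rho>)^2 * ?\<gamma> = (1 - \<beta> * \<rho>) * \<beta> * (1 - \<rho>)"
    unfolding MPgamma_beta[OF assms(4,5,3)] using d by (simp add: power2_eq_square)
  finally have "?L * (\<beta> * \<rho>) \<le> \<alpha> * C * sqrt ((1 - \<beta> * \<rho>) * \<beta> * (1 - \<rho>))"
    by (simp only: mult.commute)
  moreover have "0 < \<beta> * \<rho>"
    using assms(2,4) by simp
  ultimately show ?thesis
    by (simp only: pos_le_divide_eq)
qed

lemma tendsto_Lstar_at_left_1:
  assumes "0 < \<alpha>" "0 < \<beta>" "\<beta> \<le> 1"
  shows "((\<lambda>\<rho>. Lstar \<rho> \<beta> \<alpha>) \<longlongrightarrow> 0) (at_left 1)"
proof -
  obtain C where C: "\<And>\<gamma> L. 0 \<le> \<gamma> \<Longrightarrow> \<gamma> \<le> 1 \<Longrightarrow> 0 \<le> L \<Longrightarrow> mp_hinge \<gamma> L \<le> C * sqrt \<gamma>"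
    using mp_hinge_le_sqrt by blast
  define u where "u \<rho> = \<alpha> * C * sqrt ((1 - \<beta> * \<rho>) * \<beta> * (1 - \<rho>)) / (\<beta> * \<rho>)" for \<rho>
  have bounds: "0 \<le> Lstar \<rho> \<beta> \<alpha> \<and> Lstar \<rho> \<beta> \<alpha> \<le> u \<rho>" if \<rho>: "0 < \<rho>" "\<rho> < 1" for \<rho>
    using Lstar_bounds(1)[OF assms(1) _ _ assms(2,3), of \<rho>] \<rho> C[of "MPgamma \<rho> (\<beta> * \<rho>)"]
      MPgamma_beta_bounds[OF \<rho> assms(2,3)] assms(3)
    unfolding u_def by (intro conjI Lstar_le_of_mp_hinge_le[OF assms \<rho>]) auto
  have interval: "eventually (\<lambda>\<rho>. 0 < \<rho> \<and> \<rho> < 1) (at_left (1::real))"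
    using eventually_at_left_real[of 0 1] by (rule eventually_mono) auto
  have "eventually (\<lambda>\<rho>. 0 \<le> Lstar \<rho> \<beta> \<alpha>) (at_left 1)"
    using interval by (rule eventually_mono) (use bounds in auto)
  moreover have "eventually (\<lambda>\<rho>. Lstar \<rho> \<beta> \<alpha> \<le> u \<rho>) (at_left 1)"
    using interval by (rule eventually_mono) (use bounds in auto)
  moreover have "(u \<longlongrightarrow> \<alpha> * C * sqrt ((1 - \<beta> * 1) * \<beta> * (1 - 1)) / (\<beta> * 1)) (at_left 1)"
    unfolding u_def using assms(2) by (intro tendsto_intros) auto
  then have "(u \<longlongrightarrow> 0) (at_left 1)"
    by simp
  ultimately show ?thesis
    using tendsto_sandwich[of "\<lambda>_. 0" "\<lambda>\<rho>. Lstar \<rho> \<beta> \<alpha>" "at_left 1" u 0] by simp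
qed

lemma Lstar_gt_of_mp_hinge_ge:
  assumes "0 < \<alpha>" "0 < \<beta>" "\<beta> \<le> 1" "0 < \<rho>" "\<rho> < 1"
    and "\<kappa> \<le> mp_hinge (MPgamma \<rho> (\<beta> * \<rho>)) a"
    and "\<rho> * (1 + sqrt \<beta>) < \<alpha> * (1 - \<beta> * \<rho>) / \<beta> * \<kappa>"
  shows "a < Lstar \<rho> \<beta> \<alpha>"
proof (rule ccontr)
  let ?\<gamma> = "MPgamma \<rho> (\<beta> * \<rho>)" and ?c = "\<alpha> * (1 - \<beta> * \<rho>) / \<beta>" and ?L = "Lstar \<rho> \<beta> \<alpha>"
  assume "\<not> a < ?L"
  have c: "0 \<le> ?c"
    using beta_rho_less_1[of \<rho> \<beta>] assms by simp
  have "?c * \<kappa> \<le> ?c * mp_hinge ?\<gamma> a"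
    using assms(6) c by (rule mult_left_mono)
  also have "\<dots> \<le> ?c * mp_hinge ?\<gamma> ?L"
    using \<open>\<not> a < ?L\<close> MPgamma_beta_bounds[OF assms(4,5,2,3)] assms(3) c
    by (intro mult_left_mono mp_hinge_antimono) auto
  also have "\<dots> = \<rho> * ?L"
    using Lstar_root_iff[OF assms(1,4,5,2,3), of ?L] unfolding hinge_root_def by simp
  also have "\<dots> \<le> \<rho> * (1 + sqrt \<beta>)"
    using Lstar_bounds(2)[OF assms(1) _ _ assms(2,3), of \<rho>] assms(4,5) by (intro mult_left_mono) auto
  finally show False
    using assms(7) by simp
qed

lemma eventually_mp_hinge_MPgamma_ge:
  assumes "0 < \<beta>" "\<beta> \<le> 1" "0 \<le> a" "a < 1 + sqrt \<beta>"
  obtains \<kappa> where "0 < \<kappa>" "eventually (\<lambda>\<rho>. \<kappa> \<le> mp_hinge (MPgamma \<rho> (\<beta> * \<rho>)) a) (at_right 0)"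
proof -
  have "max (a - 1) 0 < sqrt \<beta>"
    using assms by simp
  then obtain s where "max (a - 1) 0 < s" "s < sqrt \<beta>"
    using dense by blast
  then have s: "0 < s" "s < sqrt \<beta>" "a < 1 + s"
    by auto
  define \<gamma>\<^sub>0 where "\<gamma>\<^sub>0 = s^2"
  from s have \<gamma>\<^sub>0: "0 < \<gamma>\<^sub>0" "\<gamma>\<^sub>0 < \<beta>" "sqrt \<gamma>\<^sub>0 = s"
    unfolding \<gamma>\<^sub>0_def using real_sqrt_less_iff[of "s^2" \<beta>] by auto
  have "0 < mp_hinge \<gamma>\<^sub>0 a"
    using \<gamma>\<^sub>0 s assms by (intro mp_hinge_pos) auto
  moreover have "eventually (\<lambda>\<rho>. mp_hinge \<gamma>\<^sub>0 a \<le> mp_hinge (MPgamma \<rho> (\<beta> * \<rho>)) a) (at_right 0)"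
    using order_tendstoD(1)[OF tendsto_MPgamma_beta_at_right_0[OF assms(1,2)] \<gamma>\<^sub>0(2)]
      eventually_at_right_real[of 0 1, simplified]
  proof eventually_elim
    case (elim \<rho>)
    then show ?case
      using \<gamma>\<^sub>0 assms MPgamma_beta_bounds[of \<rho> \<beta>] by (intro mp_hinge_mono) auto
  qed
  ultimately show ?thesis
    by (rule that)
qed

lemma tendsto_Lstar_at_right_0:
  assumes "0 < \<alpha>" "0 < \<beta>" "\<beta> \<le> 1"
  shows "((\<lambda>\<rho>. Lstar \<rho> \<beta> \<alpha>) \<longlongrightarrow> 1 + sqrt \<beta>) (at_right 0)"
proof (rule order_tendstoI)
  have interval: "eventually (\<lambda>\<rho>. 0 < \<rho> \<and> \<rho> < 1) (at_right (0::real))"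
    using eventually_at_right_real[of 0 1] by (rule eventually_mono) auto
  have bounds: "eventually (\<lambda>\<rho>. 0 \<le> Lstar \<rho> \<beta> \<alpha> \<and> Lstar \<rho> \<beta> \<alpha> \<le> 1 + sqrt \<beta>) (at_right 0)"
    using interval by (rule eventually_mono) (use Lstar_bounds[OF assms(1) _ _ assms(2,3)] in auto)
  {
    fix a assume a: "1 + sqrt \<beta> < a"
    show "eventually (\<lambda>\<rho>. Lstar \<rho> \<beta> \<alpha> < a) (at_right 0)"
      using bounds by (rule eventually_mono) (use a in linarith)
  }
  fix a assume a: "a < 1 + sqrt \<beta>"
  show "eventually (\<lambda>\<rho>. a < Lstar \<rho> \<beta> \<alpha>) (at_right 0)"
  proof (cases "a < 0")
    case True
    show ?thesis
      using bounds by (rule eventually_mono) (use True in linarith)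
  next
    case False
    then obtain \<kappa> where \<kappa>: "0 < \<kappa>"
      and hinge: "eventually (\<lambda>\<rho>. \<kappa> \<le> mp_hinge (MPgamma \<rho> (\<beta> * \<rho>)) a) (at_right 0)"
      using eventually_mp_hinge_MPgamma_ge[OF assms(2,3) _ a] by auto
    have "((\<lambda>\<rho>. \<rho> * (1 + sqrt \<beta>) - \<alpha> * (1 - \<beta> * \<rho>) / \<beta> * \<kappa>)
        \<longlongrightarrow> 0 * (1 + sqrt \<beta>) - \<alpha> * (1 - \<beta> * 0) / \<beta> * \<kappa>) (at_right 0)"
      by (intro tendsto_intros) (use assms in auto)
    then have "eventually (\<lambda>\<rho>. \<rho> * (1 + sqrt \<beta>) < \<alpha> * (1 - \<beta> * \<rho>) / \<beta> * \<kappa>) (at_right 0)"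
      using assms \<kappa> by (auto dest: order_tendstoD(2)[where a = 0] elim!: eventually_mono)
    then show ?thesis
      using hinge interval
      by eventually_elim (use Lstar_gt_of_mp_hinge_ge[OF assms] in auto)
  qed
qed

theorem theorem4:
  fixes \<alpha> \<beta> :: real
  assumes "\<alpha> = 1/2 \<or> \<alpha> = 1"
    and "0 < \<beta>" and "\<beta> \<le> 1"
  shows "(\<forall>\<rho>1 \<rho>2. 0 \<le> \<rho>1 \<and> \<rho>1 \<le> \<rho>2 \<and> \<rho>2 \<le> 1 \<longrightarrow> Lstar \<rho>2 \<beta> \<alpha> \<le> Lstar \<rho>1 \<beta> \<alpha>)
    \<and> ((\<lambda>\<rho>. Lstar \<rho> \<beta> \<alpha>) \<longlongrightarrow> 1 + sqrt \<beta>) (at_right 0)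
    \<and> Lstar 0 \<beta> \<alpha> = 1 + sqrt \<beta>
    \<and> ((\<lambda>\<rho>. Lstar \<rho> \<beta> \<alpha>) \<longlongrightarrow> 0) (at_left 1)
    \<and> Lstar 1 \<beta> \<alpha> = 0
    \<and> (\<forall>\<rho>. 0 < \<rho> \<and> \<rho> < 1 \<longrightarrow>
         (\<exists>!\<Lambda>. 0 \<le> \<Lambda> \<and> (\<forall>L\<ge>0. Mfun \<Lambda> \<rho> (\<beta> * \<rho>) \<alpha> \<le> Mfun L \<rho> (\<beta> * \<rho>) \<alpha>))
       \<and> (let \<gamma> = MPgamma \<rho> (\<beta> * \<rho>) in
           (\<forall>\<Lambda>\<ge>0. (MP_P \<gamma> (\<Lambda>^2) (1/2) - \<Lambda> * MP_P \<gamma> (\<Lambda>^2) 0 = \<Lambda> * \<rho> / (\<alpha> * (1 - \<rho>)))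
                     \<longleftrightarrow> \<Lambda> = Lstar \<rho> \<beta> \<alpha>)
         \<and> (\<forall>\<Lambda>1 \<Lambda>2. 0 \<le> \<Lambda>1 \<and> \<Lambda>1 \<le> \<Lambda>2 \<longrightarrow>
               MP_P \<gamma> (\<Lambda>2^2) (1/2) - \<Lambda>2 * MP_P \<gamma> (\<Lambda>2^2) 0
             \<le> MP_P \<gamma> (\<Lambda>1^2) (1/2) - \<Lambda>1 * MP_P \<gamma> (\<Lambda>1^2) 0)))"
proof -
  have \<alpha>: "0 < \<alpha>" using assms(1) by auto
  note \<beta> = assms(2,3)
  have \<gamma>: "0 < MPgamma \<rho> (\<beta> * \<rho>)" "MPgamma \<rho> (\<beta> * \<rho>) \<le> 1" if "0 < \<rho>" "\<rho> < 1" for \<rho>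
    using MPgamma_beta_bounds[OF that \<beta>] \<beta> by auto
  show ?thesis
    unfolding Let_def
  proof (intro conjI allI impI)
    show "Lstar \<rho>\<^sub>2 \<beta> \<alpha> \<le> Lstar \<rho>\<^sub>1 \<beta> \<alpha>" if "0 \<le> \<rho>\<^sub>1 \<and> \<rho>\<^sub>1 \<le> \<rho>\<^sub>2 \<and> \<rho>\<^sub>2 \<le> 1" for \<rho>\<^sub>1 \<rho>\<^sub>2
      using Lstar_antimono[OF \<alpha> \<beta>] that by blast
  qed (use \<alpha> \<beta> \<gamma> in \<open>auto simp: Lstar_0 Lstar_1 tendsto_Lstar_at_right_0 tendsto_Lstar_at_left_1
      Mfun_unique_minimiser MP_P_equation_iff_Lstar MP_P_diff_antimono\<close>)
qed

end
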